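(* Let $\mathbf{A}$ be a filtered quantization of $A$ and $S=S(\mathbf{A})$ the set of nondegenerate short star-products on $A$ corresponding to $\mathbf{A}$. Then there is a map $\pi:S\to\mathrm{Aut}(\mathbf{A})$ to the group of filtration-preserving $s$-invariant automorphisms of $\mathbf{A}$ (sending a star-product to its twisting automorphism $g$) whose fiber $\pi^{-1}(g)$ is a subset of the dual space $(HH_0(\mathbf{A},\mathbf{A}g)^s)^*$ of the $s$-invariants in $HH_0(\mathbf{A},\mathbf{A}g)$.
   Context: $A=\bigoplus_{d\ge0}A_d$ commutative graded, $A_0=\mathbb{C}$, $\dim A_d<\infty$, Poisson bracket of degree $-2$; $s=(-1)^d$. Filtered quantization: filtered algebra with $\mathrm{gr}\,\mathbf{A}\cong A$, filtration-preserving involution $s$ with associated graded $(-1)^d$. A star-product $a*b=\sum_kC_k(a,b)$ ($C_k$ of degree $-2k$, $C_0$ = product, $C_1(a,b)-C_1(b,a)=\{a,b\}$) corresponds to $\mathbf{A}$ if $(A,* )$ is identified with $\mathbf{A}$ via a quantization map ($s$-equivariant, filtration-preserving linear iso with $\mathrm{gr}=\mathrm{id}$). Short: $C_k(a,b)=0$ for $k>\min(\deg a,\deg b)$; nondegenerate: $\mathrm{CT}(a*b)$ nondegenerate on each $A_i$. For such a star-product the functional $T=\mathrm{CT}$ on $\mathbf{A}$ satisfies $T(\mathbf{a}\mathbf{b})=T(\mathbf{b}g(\mathbf{a}))$ for a unique filtration-preserving automorphism $g$ commuting with $s$ (the twisting automorphism). $\mathbf{A}g$ is $\mathbf{A}$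 with right action twisted by $g$; $HH_0(\mathbf{A},\mathbf{A}g)=\mathbf{A}/\mathrm{span}\{\mathbf{a}\mathbf{b}-\mathbf{b}g(\mathbf{a})\}$. *)

theory Defs
  imports Complex_Main
begin

text \<open>
  The commutative graded Poisson algebra A is a commutative ring
  (type 'a) with a complex scalar multiplication scA; its grading is the family
  of subspaces Ad d (the homogeneous part A_d); pb is the Poisson bracket.
  The filtered quantization is a ring (type 'b) with complex scalar multiplication
  scB, filtration F d, involution s, and the identification gr = A is given by the
  symbol maps smb d : F_d -> A_d (linear, onto, kernel F_(d-1), multiplicative,
  turning commutators into the Poisson bracket).
\<close>

definition graded_poisson_alg ::
  "(complex \<Rightarrow> 'a::comm_ring_1 \<Rightarrow> 'a) \<Rightarrow> (nat \<Rightarrow> 'a set) \<Rightarrow> ('a \<Rightarrow> 'a \<Rightarrow> 'a) \<Rightarrow> bool" where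
  "graded_poisson_alg scA Ad pb \<longleftrightarrow>
     vector_space scA \<and>
     (\<forall>c x y. scA c (x * y) = scA c x * y) \<and>
     (\<forall>d. module.subspace scA (Ad d)) \<and>
     (\<forall>d. \<exists>B. finite B \<and> B \<subseteq> Ad d \<and> module.span scA B = Ad d) \<and>
     (\<forall>x. \<exists>!f. finite {d. f d \<noteq> 0} \<and> (\<forall>d. f d \<in> Ad d) \<and> x = (\<Sum>d\<in>{d. f d \<noteq> 0}. f d)) \<and>
     (1::'a) \<noteq> 0 \<and>
     Ad 0 = range (\<lambda>c. scA c 1) \<and>
     (\<forall>d e x y. x \<in> Ad d \<longrightarrow> y \<in> Ad e \<longrightarrow> x * y \<in> Ad (d + e)) \<and>
     (\<forall>x y z. pb (x + y) z = pb x z + pb y z) \<and>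
     (\<forall>c x y. pb (scA c x) y = scA c (pb x y)) \<and>
     (\<forall>x y. pb x y = - pb y x) \<and>
     (\<forall>x y z. pb x (y * z) = pb x y * z + y * pb x z) \<and>
     (\<forall>x y z. pb x (pb y z) = pb (pb x y) z + pb y (pb x z)) \<and>
     (\<forall>d e x y. x \<in> Ad d \<longrightarrow> y \<in> Ad e \<longrightarrow>
        pb x y \<in> (if 2 \<le> d + e then Ad (d + e - 2) else {0}))"

definition filtered_quantization ::
  "(complex \<Rightarrow> 'a::comm_ring_1 \<Rightarrow> 'a) \<Rightarrow> (nat \<Rightarrow> 'a set) \<Rightarrow> ('a \<Rightarrow> 'a \<Rightarrow> 'a) \<Rightarrow>
   (complex \<Rightarrow> 'b::ring_1 \<Rightarrow> 'b) \<Rightarrow> (nat \<Rightarrow> 'b set) \<Rightarrow> (nat \<Rightarrow> 'b \<Rightarrow> 'a) \<Rightarrow> ('b \<Rightarrow> 'b) \<Rightarrow> bool" where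
  "filtered_quantization scA Ad pb scB F smb s \<longleftrightarrow>
     vector_space scB \<and>
     (\<forall>c x y. scB c (x * y) = scB c x * y \<and> scB c (x * y) = x * scB c y) \<and>
     (\<forall>d. module.subspace scB (F d)) \<and>
     (\<forall>d. F d \<subseteq> F (Suc d)) \<and> (\<Union>d. F d) = UNIV \<and> 1 \<in> F 0 \<and>
     (\<forall>d e x y. x \<in> F d \<longrightarrow> y \<in> F e \<longrightarrow> x * y \<in> F (d + e)) \<and>
     \<comment> \<open>gr of the quantization is identified with A\<close>
     (\<forall>d x y. x \<in> F d \<longrightarrow> y \<in> F d \<longrightarrow> smb d (x + y) = smb d x + smb d y) \<and>
     (\<forall>d c x. x \<in> F d \<longrightarrow> smb d (scB c x) = scA c (smb d x)) \<and>
     (\<forall>d. smb d ` F d = Ad d) \<and>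
     (\<forall>d x. x \<in> F d \<longrightarrow> (smb d x = 0 \<longleftrightarrow> x \<in> (if d = 0 then {0} else F (d - 1)))) \<and>
     smb 0 1 = 1 \<and>
     (\<forall>d e x y. x \<in> F d \<longrightarrow> y \<in> F e \<longrightarrow> smb (d + e) (x * y) = smb d x * smb e y) \<and>
     (\<forall>d e x y. x \<in> F d \<longrightarrow> y \<in> F e \<longrightarrow>
        x * y - y * x \<in> (if 2 \<le> d + e then F (d + e - 2) else {0}) \<and>
        (2 \<le> d + e \<longrightarrow> smb (d + e - 2) (x * y - y * x) = pb (smb d x) (smb e y))) \<and>
     \<comment> \<open>the involution s\<close>
     (\<forall>x. s (s x) = x) \<and>
     (\<forall>x y. s (x + y) = s x + s y) \<and> (\<forall>c x. s (scB c x) = scB c (s x)) \<and>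
     (\<forall>x y. s (x * y) = s x * s y) \<and> s 1 = 1 \<and>
     (\<forall>d x. x \<in> F d \<longrightarrow> s x \<in> F d \<and> smb d (s x) = scA ((-1) ^ d) (smb d x))"

definition quantization_map ::
  "(complex \<Rightarrow> 'a::comm_ring_1 \<Rightarrow> 'a) \<Rightarrow> (nat \<Rightarrow> 'a set) \<Rightarrow>
   (complex \<Rightarrow> 'b::ring_1 \<Rightarrow> 'b) \<Rightarrow> (nat \<Rightarrow> 'b set) \<Rightarrow> (nat \<Rightarrow> 'b \<Rightarrow> 'a) \<Rightarrow> ('b \<Rightarrow> 'b) \<Rightarrow>
   ('a \<Rightarrow> 'b) \<Rightarrow> bool" where
  "quantization_map scA Ad scB F smb s \<phi> \<longleftrightarrow>
     bij \<phi> \<and>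
     (\<forall>x y. \<phi> (x + y) = \<phi> x + \<phi> y) \<and> (\<forall>c x. \<phi> (scA c x) = scB c (\<phi> x)) \<and>
     (\<forall>d a. a \<in> Ad d \<longrightarrow> \<phi> a \<in> F d \<and> smb d (\<phi> a) = a \<and> s (\<phi> a) = scB ((-1) ^ d) (\<phi> a))"

definition star_of :: "(nat \<Rightarrow> 'a \<Rightarrow> 'a \<Rightarrow> 'a::comm_ring_1) \<Rightarrow> 'a \<Rightarrow> 'a \<Rightarrow> 'a" where
  "star_of C a b = (\<Sum>k\<in>{k. C k a b \<noteq> 0}. C k a b)"

definition star_product ::
  "(complex \<Rightarrow> 'a::comm_ring_1 \<Rightarrow> 'a) \<Rightarrow> (nat \<Rightarrow> 'a set) \<Rightarrow> ('a \<Rightarrow> 'a \<Rightarrow> 'a) \<Rightarrow>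
   (nat \<Rightarrow> 'a \<Rightarrow> 'a \<Rightarrow> 'a) \<Rightarrow> bool" where
  "star_product scA Ad pb C \<longleftrightarrow>
     (\<forall>k x y z. C k (x + y) z = C k x z + C k y z \<and> C k x (y + z) = C k x y + C k x z) \<and>
     (\<forall>k c x y. C k (scA c x) y = scA c (C k x y) \<and> C k x (scA c y) = scA c (C k x y)) \<and>
     (\<forall>k d e a b. a \<in> Ad d \<longrightarrow> b \<in> Ad e \<longrightarrow>
        C k a b \<in> (if 2 * k \<le> d + e then Ad (d + e - 2 * k) else {0})) \<and>
     (\<forall>a b. C 0 a b = a * b) \<and>
     (\<forall>a b. C 1 a b - C 1 b a = pb a b)"

definition corresponds_to ::
  "(complex \<Rightarrow> 'a::comm_ring_1 \<Rightarrow> 'a) \<Rightarrow> (nat \<Rightarrow> 'a set) \<Rightarrow>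
   (complex \<Rightarrow> 'b::ring_1 \<Rightarrow> 'b) \<Rightarrow> (nat \<Rightarrow> 'b set) \<Rightarrow> (nat \<Rightarrow> 'b \<Rightarrow> 'a) \<Rightarrow> ('b \<Rightarrow> 'b) \<Rightarrow>
   (nat \<Rightarrow> 'a \<Rightarrow> 'a \<Rightarrow> 'a) \<Rightarrow> ('a \<Rightarrow> 'b) \<Rightarrow> bool" where
  "corresponds_to scA Ad scB F smb s C \<phi> \<longleftrightarrow>
     quantization_map scA Ad scB F smb s \<phi> \<and> (\<forall>a b. \<phi> (star_of C a b) = \<phi> a * \<phi> b)"

definition short_star :: "(nat \<Rightarrow> 'a set) \<Rightarrow> (nat \<Rightarrow> 'a \<Rightarrow> 'a \<Rightarrow> 'a::comm_ring_1) \<Rightarrow> bool" where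
  "short_star Ad C \<longleftrightarrow>
     (\<forall>k d e a b. a \<in> Ad d \<longrightarrow> b \<in> Ad e \<longrightarrow> min d e < k \<longrightarrow> C k a b = 0)"

definition CT :: "(complex \<Rightarrow> 'a::comm_ring_1 \<Rightarrow> 'a) \<Rightarrow> (nat \<Rightarrow> 'a set) \<Rightarrow> 'a \<Rightarrow> complex" where
  "CT scA Ad a = (THE c. a - scA c 1 \<in> module.span scA (\<Union>d\<in>{1..}. Ad d))"

definition nondegenerate_star ::
  "(complex \<Rightarrow> 'a::comm_ring_1 \<Rightarrow> 'a) \<Rightarrow> (nat \<Rightarrow> 'a set) \<Rightarrow> (nat \<Rightarrow> 'a \<Rightarrow> 'a \<Rightarrow> 'a) \<Rightarrow> bool" where
  "nondegenerate_star scA Ad C \<longleftrightarrow>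
     (\<forall>i a. a \<in> Ad i \<longrightarrow> a \<noteq> 0 \<longrightarrow> (\<exists>b\<in>Ad i. CT scA Ad (star_of C a b) \<noteq> 0))"

text \<open>S(A): nondegenerate short star-products corresponding to the quantization,
  each recorded together with the quantization map identifying it with the quantization.\<close>
definition nd_short_star_products ::
  "(complex \<Rightarrow> 'a::comm_ring_1 \<Rightarrow> 'a) \<Rightarrow> (nat \<Rightarrow> 'a set) \<Rightarrow> ('a \<Rightarrow> 'a \<Rightarrow> 'a) \<Rightarrow>
   (complex \<Rightarrow> 'b::ring_1 \<Rightarrow> 'b) \<Rightarrow> (nat \<Rightarrow> 'b set) \<Rightarrow> (nat \<Rightarrow> 'b \<Rightarrow> 'a) \<Rightarrow> ('b \<Rightarrow> 'b) \<Rightarrow>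
   ((nat \<Rightarrow> 'a \<Rightarrow> 'a \<Rightarrow> 'a) \<times> ('a \<Rightarrow> 'b)) set" where
  "nd_short_star_products scA Ad pb scB F smb s =
     {(C, \<phi>). star_product scA Ad pb C \<and> corresponds_to scA Ad scB F smb s C \<phi> \<and>
              short_star Ad C \<and> nondegenerate_star scA Ad C}"

definition trace_T ::
  "(complex \<Rightarrow> 'a::comm_ring_1 \<Rightarrow> 'a) \<Rightarrow> (nat \<Rightarrow> 'a set) \<Rightarrow>
   (nat \<Rightarrow> 'a \<Rightarrow> 'a \<Rightarrow> 'a) \<times> ('a \<Rightarrow> 'b) \<Rightarrow> 'b \<Rightarrow> complex" where
  "trace_T scA Ad P x = CT scA Ad (inv (snd P) x)"

definition filt_aut ::
  "(complex \<Rightarrow> 'b::ring_1 \<Rightarrow> 'b) \<Rightarrow> (nat \<Rightarrow> 'b set) \<Rightarrow> ('b \<Rightarrow> 'b) \<Rightarrow> ('b \<Rightarrow> 'b) set" where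
  "filt_aut scB F s =
     {g. bij g \<and> (\<forall>x y. g (x + y) = g x + g y) \<and> (\<forall>c x. g (scB c x) = scB c (g x)) \<and>
         (\<forall>x y. g (x * y) = g x * g y) \<and> g 1 = 1 \<and> (\<forall>d. g ` F d \<subseteq> F d) \<and> g \<circ> s = s \<circ> g}"

text \<open>Since s commutes with g it preserves
  K = span {a b - b g(a)}, and HH_0(A,Ag)^s = A^s / (A^s \<inter> K).  Its dual is
  represented by the linear functionals on A^s = {x. s x = x} vanishing on A^s \<inter> K
  (extended by 0 outside A^s).\<close>
definition hh0_s_dual ::
  "(complex \<Rightarrow> 'b::ring_1 \<Rightarrow> 'b) \<Rightarrow> ('b \<Rightarrow> 'b) \<Rightarrow> ('b \<Rightarrow> 'b) \<Rightarrow> ('b \<Rightarrow> complex) set" where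
  "hh0_s_dual scB s g =
     {f. (\<forall>x y. s x = x \<longrightarrow> s y = y \<longrightarrow> f (x + y) = f x + f y) \<and>
         (\<forall>c x. s x = x \<longrightarrow> f (scB c x) = c * f x) \<and>
         (\<forall>x. s x = x \<longrightarrow> x \<in> module.span scB {a * b - b * g a | a b. True} \<longrightarrow> f x = 0) \<and>
         (\<forall>x. s x \<noteq> x \<longrightarrow> f x = 0)}"

definition restrict_s :: "('b \<Rightarrow> 'b) \<Rightarrow> ('b \<Rightarrow> complex) \<Rightarrow> 'b \<Rightarrow> complex" where
  "restrict_s s T x = (if s x = x then T x else 0)"

end

theory Submission
  imports Defs "HOL-Library.Function_Algebras"
begin

text \<open>
  Transport the grading of \<open>A\<close> to the quantization along the quantization map \<open>\<phi>\<close> and put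
  \<open>T (\<phi> a) = CT a\<close>. By shortness, \<open>T (\<phi> a * \<phi> b) = CT (a * b)\<close> vanishes for homogeneous \<open>a\<close>, \<open>b\<close>
  of different degrees, so the form \<open>(x, y) \<mapsto> T (x y)\<close> is block diagonal with
  finite-dimensional blocks \<open>\<phi> A\<^sub>d\<close>, each nondegenerate by assumption. Working block by block,
  every functional \<open>y \<mapsto> T (x y)\<close> is \<open>y \<mapsto> T (y z)\<close> for a unique \<open>z = g x\<close>; uniqueness makes \<open>g\<close> an
  automorphism, it preserves the filtration because the blocks do, and it commutes with \<open>s\<close>
  because \<open>T \<circ> s = T\<close>. Then \<open>T\<close> kills \<open>a b - b g(a)\<close>, so its restriction to \<open>s\<close>-invariants is a
  functional on \<open>HH\<^sub>0(A, A g)\<^sup>s\<close>. This restriction determines \<open>T\<close> (again as \<open>T \<circ> s = T\<close>); \<open>T\<close>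
  determines \<open>\<phi>\<close>, since \<open>\<phi> a\<close> for \<open>a \<in> A\<^sub>d\<close> is the only lift of \<open>a\<close> to \<open>F\<^sub>d\<close> orthogonal to \<open>F\<^sub>d\<^sub>-\<^sub>1\<close>;
  and \<open>\<phi>\<close> determines the star product, whose coefficients \<open>C\<^sub>k(a, b)\<close> are homogeneous components
  of \<open>a * b\<close>.
\<close>

section \<open>Nondegenerate forms on finite-dimensional spaces\<close>

context vector_space
begin

lemma additive_eq_on_span:
  assumes x: "x \<in> span B"
    and zero: "f 0 = g 0"
    and f_add: "\<And>x y. x \<in> span B \<Longrightarrow> y \<in> span B \<Longrightarrow> f (x + y) = f x + f y"
    and g_add: "\<And>x y. x \<in> span B \<Longrightarrow> y \<in> span B \<Longrightarrow> g (x + y) = g x + g y"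
    and f_scale: "\<And>c x. x \<in> span B \<Longrightarrow> f (c *s x) = c * f x"
    and g_scale: "\<And>c x. x \<in> span B \<Longrightarrow> g (c *s x) = c * g x"
    and eq: "\<And>b. b \<in> B \<Longrightarrow> f b = g b"
  shows "f x = (g x :: 'a)"
proof -
  have "x \<in> span B \<longrightarrow> f x = g x"
    using x
  proof (induction rule: span_induct_alt)
    case base
    then show ?case using zero by simp
  next
    case (step c b y)
    show ?case
    proof
      assume cby: "c *s b + y \<in> span B"
      have b: "b \<in> span B" using step(1) by (rule span_base)
      then have cb: "c *s b \<in> span B" by (rule span_scale)
      have y: "y \<in> span B" using span_diff[OF cby cb] by simp
      show "f (c *s b + y) = g (c *s b + y)"
        using f_add[OF cb y] g_add[OF cb y] f_scale[OF b] g_scale[OF b] eq[OF step(1)] step(2) y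
        by simp
    qed
  qed
  then show ?thesis using x by simp
qed

text \<open>The map \<open>u \<mapsto> \<beta> u\<close>, restricted to \<open>B\<close>, embeds
  \<open>span B\<close> into the functions supported on \<open>B\<close>, a space of dimension \<open>card B\<close>; so it is onto.\<close>
lemma nondegenerate_form_represents:
  fixes \<beta> :: "'b \<Rightarrow> 'b \<Rightarrow> 'a" and f :: "'b \<Rightarrow> 'a"
  assumes fin: "finite B" and ind: "independent B"
    and add_left: "\<And>x y z. \<beta> (x + y) z = \<beta> x z + \<beta> y z"
    and scale_left: "\<And>c x z. \<beta> (c *s x) z = c * \<beta> x z"
    and add_right: "\<And>x y z. \<beta> z (x + y) = \<beta> z x + \<beta> z y"
    and scale_right: "\<And>c x z. \<beta> z (c *s x) = c * \<beta> z x"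
    and nondeg: "\<And>u. u \<in> span B \<Longrightarrow> u \<noteq> 0 \<Longrightarrow> \<exists>v\<in>span B. \<beta> u v \<noteq> 0"
    and f_add: "\<And>x y. x \<in> span B \<Longrightarrow> y \<in> span B \<Longrightarrow> f (x + y) = f x + f y"
    and f_scale: "\<And>c x. x \<in> span B \<Longrightarrow> f (c *s x) = c * f x"
  shows "\<exists>u\<in>span B. \<forall>v\<in>span B. f v = \<beta> u v"
proof -
  define fscale :: "'a \<Rightarrow> ('b \<Rightarrow> 'a) \<Rightarrow> ('b \<Rightarrow> 'a)" where "fscale = (\<lambda>c h b. c * h b)"
  interpret W: vector_space fscale
    by unfold_locales (auto simp: fscale_def fun_eq_iff algebra_simps)
  define L where "L = (\<lambda>u b. if b \<in> B then \<beta> u b else 0)"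
  interpret L: module_hom scale fscale L
    unfolding module_hom_iff using module_axioms W.module_axioms
    by (auto simp: L_def fscale_def fun_eq_iff add_left scale_left)
  have \<beta>_eq_0: "\<beta> u v = 0" if "\<forall>b\<in>B. \<beta> u b = 0" "v \<in> span B" for u v
    using additive_eq_on_span[OF that(2), of "\<beta> u" "\<lambda>_. 0"] that(1)
      scale_right[where c=0 and x=0 and z=u] add_right scale_right by auto
  have inj: "inj_on L (span B)"
    unfolding L.inj_on_iff_eq_0[OF subspace_span]
  proof (intro ballI impI)
    fix u assume u: "u \<in> span B" "L u = 0"
    then have "\<forall>b\<in>B. \<beta> u b = 0" by (auto simp: L_def fun_eq_iff) metis
    then show "u = 0" using \<beta>_eq_0 nondeg u(1) by blast
  qed
  have indL: "W.independent (L ` B)"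
    by (rule L.independent_injective_image[OF ind inj])
  have card_L: "card (L ` B) = card B"
    by (rule card_image, rule inj_on_subset[OF inj span_superset])
  define e where "e = (\<lambda>b (b'::'b). if b' = b then (1::'a) else 0)"
  have supported_in_span: "h \<in> W.span (e ` B)" if "\<forall>b. b \<notin> B \<longrightarrow> h b = 0" for h
  proof -
    have "h = (\<Sum>b\<in>B. fscale (h b) (e b))"
    proof
      fix b'
      have "(\<Sum>b\<in>B. fscale (h b) (e b)) b' = (\<Sum>b\<in>B. h b * (if b' = b then 1 else 0))"
        by (induction B rule: infinite_finite_induct) (auto simp: fscale_def e_def)
      also have "\<dots> = h b'" using that fin by (auto simp: if_distrib cong: if_cong)
      finally show "h b' = (\<Sum>b\<in>B. fscale (h b) (e b)) b'" by simp
    qed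
    also have "\<dots> \<in> W.span (e ` B)"
      by (intro W.span_sum W.span_scale W.span_base) auto
    finally show ?thesis .
  qed
  define h where "h = (\<lambda>b. if b \<in> B then f b else 0)"
  have "h \<in> W.span (L ` B)"
  proof (rule ccontr)
    assume h_notin: "h \<notin> W.span (L ` B)"
    have "insert h (L ` B) \<subseteq> W.span (e ` B)"
      using supported_in_span by (auto simp: h_def L_def)
    from W.independent_span_bound[OF _ W.independent_insertI[OF h_notin indL] this] fin
    have "card (insert h (L ` B)) \<le> card B"
      using card_image_le[OF fin, of e] by simp
    moreover have "h \<notin> L ` B" using h_notin W.span_base by blast
    ultimately show False using card_L fin by simp
  qed
  then obtain u where u: "u \<in> span B" "h = L u"
    using L.span_image by auto
  have "f v = \<beta> u v" if v: "v \<in> span B" for v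
  proof (rule additive_eq_on_span[OF v])
    show "f 0 = \<beta> u 0"
      using f_scale[where c=0 and x=0] scale_right[where c=0 and x=0 and z=u] by (simp add: span_zero)
    show "f b = \<beta> u b" if "b \<in> B" for b
      using u(2) that by (auto simp: h_def L_def fun_eq_iff) metis
  qed (use f_add f_scale add_right scale_right in auto)
  then show ?thesis using u(1) by blast
qed

lemma nondegenerate_form_transpose:
  fixes \<beta> :: "'b \<Rightarrow> 'b \<Rightarrow> 'a"
  assumes fin: "finite B" and ind: "independent B"
    and add_left: "\<And>x y z. \<beta> (x + y) z = \<beta> x z + \<beta> y z"
    and scale_left: "\<And>c x z. \<beta> (c *s x) z = c * \<beta> x z"
    and add_right: "\<And>x y z. \<beta> z (x + y) = \<beta> z x + \<beta> z y"
    and scale_right: "\<And>c x z. \<beta> z (c *s x) = c * \<beta> z x"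
    and nondeg: "\<And>u. u \<in> span B \<Longrightarrow> u \<noteq> 0 \<Longrightarrow> \<exists>v\<in>span B. \<beta> u v \<noteq> 0"
    and w: "w \<in> span B" "w \<noteq> 0"
  shows "\<exists>v\<in>span B. \<beta> v w \<noteq> 0"
proof -
  have "(\<Sum>b\<in>B. representation B w b *s b) = w"
    by (rule sum_representation_eq[OF ind w(1) fin order_refl])
  then obtain b where b: "representation B w b \<noteq> 0"
    using w(2) by (metis (no_types, lifting) scale_zero_left sum.neutral)
  obtain u where "u \<in> span B" "\<forall>v\<in>span B. representation B v b = \<beta> u v"
    using nondegenerate_form_represents[OF fin ind add_left scale_left add_right scale_right nondeg,
        of "\<lambda>v. representation B v b"]
    by (auto simp: representation_add[OF ind] representation_scale[OF ind])
  then show ?thesis using b w(1) by metis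
qed

end

section \<open>Block-diagonal forms\<close>

locale orthogonal_blocks = vector_space scale
  for scale :: "'a::field \<Rightarrow> 'b::ab_group_add \<Rightarrow> 'b" (infixr \<open>*s\<close> 75) +
  fixes V :: "'i \<Rightarrow> 'b set" and p :: "'i \<Rightarrow> 'b \<Rightarrow> 'b" and \<beta> :: "'b \<Rightarrow> 'b \<Rightarrow> 'a"
  assumes add_left: "\<beta> (x + y) z = \<beta> x z + \<beta> y z"
    and scale_left: "\<beta> (c *s x) z = c * \<beta> x z"
    and add_right: "\<beta> z (x + y) = \<beta> z x + \<beta> z y"
    and scale_right: "\<beta> z (c *s x) = c * \<beta> z x"
    and block_basis: "\<exists>B. finite B \<and> independent B \<and> span B = V e"
    and comp_in_block: "p e x \<in> V e"
    and finite_comp_support: "finite {e. p e x \<noteq> 0}"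
    and sum_comps: "(\<Sum>e | p e x \<noteq> 0. p e x) = x"
    and blocks_orthogonal: "x \<in> V e \<Longrightarrow> y \<in> V e' \<Longrightarrow> e \<noteq> e' \<Longrightarrow> \<beta> x y = 0"
    and block_nondegenerate: "u \<in> V e \<Longrightarrow> u \<noteq> 0 \<Longrightarrow> \<exists>v\<in>V e. \<beta> u v \<noteq> 0"
begin

lemma sum_comps_superset:
  assumes "finite D" "{e. p e x \<noteq> 0} \<subseteq> D"
  shows "(\<Sum>e\<in>D. p e x) = x"
  using sum.mono_neutral_left[OF assms, of "\<lambda>e. p e x"] sum_comps[of x] by simp

lemma form_sum_left: "\<beta> (\<Sum>e\<in>D. x e) z = (\<Sum>e\<in>D. \<beta> (x e) z)"
proof -
  interpret additive "\<lambda>x. \<beta> x z" by unfold_locales (rule add_left)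
  show ?thesis by (rule sum)
qed

lemma form_sum_right: "\<beta> z (\<Sum>e\<in>D. x e) = (\<Sum>e\<in>D. \<beta> z (x e))"
proof -
  interpret additive "\<beta> z" by unfold_locales (rule add_right)
  show ?thesis by (rule sum)
qed

lemma form_comp_left:
  assumes v: "v \<in> V e"
  shows "\<beta> x v = \<beta> (p e x) v"
proof -
  let ?D = "insert e {e. p e x \<noteq> 0}"
  have fin: "finite ?D" using finite_comp_support by simp
  have "\<beta> x v = (\<Sum>e'\<in>?D. \<beta> (p e' x) v)"
    using sum_comps_superset[OF fin, of x] form_sum_left by (metis subset_insertI)
  also have "\<dots> = \<beta> (p e x) v + (\<Sum>e'\<in>?D - {e}. \<beta> (p e' x) v)"
    by (rule sum.remove[OF fin]) simp
  also have "(\<Sum>e'\<in>?D - {e}. \<beta> (p e' x) v) = 0"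
    by (rule sum.neutral) (auto intro: blocks_orthogonal[OF comp_in_block v])
  finally show ?thesis by simp
qed

lemma block_nondegenerate_right:
  assumes "u \<in> V e" "u \<noteq> 0"
  shows "\<exists>v\<in>V e. \<beta> v u \<noteq> 0"
proof -
  obtain B where B: "finite B" "independent B" "span B = V e" using block_basis by blast
  show ?thesis
    using nondegenerate_form_transpose[OF B(1,2) add_left scale_left add_right scale_right]
      block_nondegenerate assms B(3) by auto
qed

lemma transpose: "orthogonal_blocks scale V p (\<lambda>x y. \<beta> y x)"
proof unfold_locales
  show "\<exists>v\<in>V e. \<beta> v u \<noteq> 0" if "u \<in> V e" "u \<noteq> 0" for u e
    using block_nondegenerate_right[OF that] .
  show "\<beta> y x = 0" if "x \<in> V e" "y \<in> V e'" "e \<noteq> e'" for x y e e'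
    using blocks_orthogonal[OF that(2,1)] that(3) by simp
qed (simp_all add: add_right scale_right add_left scale_left block_basis comp_in_block
       finite_comp_support sum_comps)

lemma form_comp_right: "v \<in> V e \<Longrightarrow> \<beta> v x = \<beta> v (p e x)"
  using orthogonal_blocks.form_comp_left[OF transpose] .

lemma eq_0_if_orthogonal_to_blocks:
  assumes outside: "\<And>e. e \<notin> D \<Longrightarrow> p e u = 0"
    and orth: "\<And>e v. e \<in> D \<Longrightarrow> v \<in> V e \<Longrightarrow> \<beta> v u = 0"
  shows "u = 0"
proof -
  have "p e u = 0" for e
  proof (rule ccontr)
    assume "p e u \<noteq> 0"
    moreover obtain v where v: "v \<in> V e" "\<beta> v (p e u) \<noteq> 0"
      using block_nondegenerate_right[OF comp_in_block] \<open>p e u \<noteq> 0\<close> by blast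
    moreover have "\<beta> v u = \<beta> v (p e u)" by (rule form_comp_right[OF v(1)])
    ultimately show False using outside orth by (cases "e \<in> D") auto
  qed
  then show ?thesis using sum_comps[of u] by simp
qed

text \<open>Represent \<open>f\<close> blockwise and add up the finitely many representatives.\<close>
lemma functional_represented_right:
  assumes D: "finite D"
    and f_add: "\<And>x y. f (x + y) = f x + f y"
    and f_scale: "\<And>c x. f (c *s x) = c * f x"
    and outside: "\<And>e v. e \<notin> D \<Longrightarrow> v \<in> V e \<Longrightarrow> f v = 0"
  shows "\<exists>z\<in>span (\<Union>e\<in>D. V e). \<forall>y. f y = \<beta> y z"
proof -
  have "\<exists>w\<in>V e. \<forall>v\<in>V e. f v = \<beta> v w" for e
  proof -
    obtain B where B: "finite B" "independent B" "span B = V e" using block_basis by blast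
    show ?thesis
      using nondegenerate_form_represents[OF B(1,2), of "\<lambda>x y. \<beta> y x" f]
        add_right scale_right add_left scale_left block_nondegenerate_right f_add f_scale B(3)
      by auto
  qed
  then obtain w where w: "\<And>e. w e \<in> V e" "\<And>e v. v \<in> V e \<Longrightarrow> f v = \<beta> v (w e)"
    by metis
  have "f y = \<beta> y (\<Sum>e\<in>D. w e)" for y
  proof -
    let ?E = "D \<union> {e. p e y \<noteq> 0}"
    have E: "finite ?E" using D finite_comp_support by simp
    interpret f: additive f by unfold_locales (rule f_add)
    have "f y = f (\<Sum>e\<in>?E. p e y)"
      using sum_comps_superset[OF E Un_upper2] by simp
    also have "\<dots> = (\<Sum>e\<in>?E. f (p e y))" by (rule f.sum)
    also have "\<dots> = (\<Sum>e\<in>D. f (p e y))"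
      by (rule sum.mono_neutral_right) (use E outside comp_in_block in auto)
    also have "\<dots> = (\<Sum>e\<in>D. \<beta> y (w e))"
      by (intro sum.cong refl) (simp only: w(2)[OF comp_in_block] form_comp_left[OF w(1), where x=y])
    finally show ?thesis by (simp add: form_sum_right)
  qed
  moreover have "(\<Sum>e\<in>D. w e) \<in> span (\<Union>e\<in>D. V e)"
    using w(1) by (intro span_sum span_base) auto
  ultimately show ?thesis by blast
qed

lemma functional_represented_left:
  assumes "finite D"
    and "\<And>x y. f (x + y) = f x + f y"
    and "\<And>c x. f (c *s x) = c * f x"
    and "\<And>e v. e \<notin> D \<Longrightarrow> v \<in> V e \<Longrightarrow> f v = 0"
  shows "\<exists>z\<in>span (\<Union>e\<in>D. V e). \<forall>y. f y = \<beta> z y"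
  using orthogonal_blocks.functional_represented_right[OF transpose assms] .

end

section \<open>Homogeneous components and the constant term\<close>

locale graded_poisson_algebra =
  fixes scA :: "complex \<Rightarrow> 'a::comm_ring_1 \<Rightarrow> 'a" and Ad :: "nat \<Rightarrow> 'a set"
    and pb :: "'a \<Rightarrow> 'a \<Rightarrow> 'a"
  assumes graded_poisson: "graded_poisson_alg scA Ad pb"

sublocale graded_poisson_algebra \<subseteq> A: vector_space scA
  using graded_poisson unfolding graded_poisson_alg_def by simp

context graded_poisson_algebra
begin

lemma Ad_subspace: "A.subspace (Ad d)"
  using graded_poisson unfolding graded_poisson_alg_def by simp

lemma Ad_finite_span: "\<exists>G. finite G \<and> G \<subseteq> Ad d \<and> A.span G = Ad d"
  using graded_poisson unfolding graded_poisson_alg_def by (elim conjE) (rule spec)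

lemma homogeneous_decomposition:
  "\<exists>!f. finite {d. f d \<noteq> 0} \<and> (\<forall>d. f d \<in> Ad d) \<and> x = (\<Sum>d\<in>{d. f d \<noteq> 0}. f d)"
  using graded_poisson unfolding graded_poisson_alg_def by (elim conjE) (rule spec)

lemma one_neq_zero: "(1::'a) \<noteq> 0"
  using graded_poisson unfolding graded_poisson_alg_def by simp

lemma Ad_0: "Ad 0 = range (\<lambda>c. scA c 1)"
  using graded_poisson unfolding graded_poisson_alg_def by simp

lemma Ad_zero: "0 \<in> Ad d"
  using Ad_subspace A.subspace_0 by blast

lemma Ad_add: "x \<in> Ad d \<Longrightarrow> y \<in> Ad d \<Longrightarrow> x + y \<in> Ad d"
  using Ad_subspace A.subspace_add by blast

lemma Ad_scale: "x \<in> Ad d \<Longrightarrow> scA c x \<in> Ad d"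
  using Ad_subspace A.subspace_scale by blast

definition hcomp :: "'a \<Rightarrow> nat \<Rightarrow> 'a" where
  "hcomp x = (THE f. finite {d. f d \<noteq> 0} \<and> (\<forall>d. f d \<in> Ad d) \<and> x = (\<Sum>d\<in>{d. f d \<noteq> 0}. f d))"

lemma hcomp_spec:
  "finite {d. hcomp x d \<noteq> 0} \<and> (\<forall>d. hcomp x d \<in> Ad d) \<and> x = (\<Sum>d\<in>{d. hcomp x d \<noteq> 0}. hcomp x d)"
  unfolding hcomp_def by (rule theI'[OF homogeneous_decomposition])

lemma finite_hcomp_support: "finite {d. hcomp x d \<noteq> 0}"
  using hcomp_spec by blast

lemma hcomp_in: "hcomp x d \<in> Ad d"
  using hcomp_spec by blast

lemma sum_hcomp: "(\<Sum>d | hcomp x d \<noteq> 0. hcomp x d) = x"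
  using hcomp_spec by simp

lemma sum_hcomp_superset:
  assumes "finite D" "{d. hcomp x d \<noteq> 0} \<subseteq> D"
  shows "(\<Sum>d\<in>D. hcomp x d) = x"
  using sum.mono_neutral_left[OF assms, of "hcomp x"] sum_hcomp[of x] by simp

lemma hcomp_unique:
  assumes "finite D" "\<And>d. f d \<in> Ad d" "\<And>d. d \<notin> D \<Longrightarrow> f d = 0" "x = (\<Sum>d\<in>D. f d)"
  shows "hcomp x = f"
proof -
  have supp: "{d. f d \<noteq> 0} \<subseteq> D" using assms(3) by blast
  then have "x = (\<Sum>d\<in>{d. f d \<noteq> 0}. f d)"
    using assms(4) sum.mono_neutral_left[OF assms(1) supp, of f] by simp
  moreover have "finite {d. f d \<noteq> 0}" using assms(1) supp by (rule finite_subset[rotated])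
  ultimately show ?thesis
    unfolding hcomp_def using assms(2) by (intro the1_equality[OF homogeneous_decomposition]) auto
qed

lemma hcomp_homogeneous: "y \<in> Ad e \<Longrightarrow> hcomp y = (\<lambda>d. if d = e then y else 0)"
  by (rule hcomp_unique[of "{e}"]) (auto simp: Ad_zero)

lemma hcomp_zero: "hcomp 0 = (\<lambda>d. 0)"
  by (rule hcomp_unique[of "{}"]) (auto simp: Ad_zero)

lemma hcomp_add: "hcomp (x + y) = (\<lambda>d. hcomp x d + hcomp y d)"
proof (rule hcomp_unique)
  let ?D = "{d. hcomp x d \<noteq> 0} \<union> {d. hcomp y d \<noteq> 0}"
  show "finite ?D" using finite_hcomp_support by simp
  show "x + y = (\<Sum>d\<in>?D. hcomp x d + hcomp y d)"
    using finite_hcomp_support by (simp add: sum.distrib sum_hcomp_superset)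
qed (auto intro: Ad_add hcomp_in)

lemma hcomp_scale: "hcomp (scA c x) = (\<lambda>d. scA c (hcomp x d))"
proof (rule hcomp_unique)
  show "scA c x = (\<Sum>d | hcomp x d \<noteq> 0. scA c (hcomp x d))"
    using sum_hcomp[of x] A.scale_sum_right by metis
qed (auto intro: Ad_scale hcomp_in finite_hcomp_support)

lemma hcomp_diff: "hcomp (x - y) = (\<lambda>d. hcomp x d - hcomp y d)"
  using hcomp_add[of "x - y" y] by (simp add: fun_eq_iff algebra_simps)

lemma hcomp_sum: "hcomp (\<Sum>i\<in>I. x i) d = (\<Sum>i\<in>I. hcomp (x i) d)"
  by (induction I rule: infinite_finite_induct) (auto simp: hcomp_zero hcomp_add)

lemma additive_eq_on_homogeneous:
  fixes f g :: "'a \<Rightarrow> 'c::ab_group_add"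
  assumes "additive f" "additive g" and eq: "\<And>d a. a \<in> Ad d \<Longrightarrow> f a = g a"
  shows "f = g"
proof
  fix x
  have "f x = (\<Sum>d | hcomp x d \<noteq> 0. f (hcomp x d))"
    using additive.sum[OF assms(1)] sum_hcomp[of x] by metis
  also have "\<dots> = (\<Sum>d | hcomp x d \<noteq> 0. g (hcomp x d))"
    using eq[OF hcomp_in] by simp
  also have "\<dots> = g x"
    using additive.sum[OF assms(2)] sum_hcomp[of x] by metis
  finally show "f x = g x" .
qed

lemma hcomp_0_span_positive:
  assumes "y \<in> A.span (\<Union>d\<in>{1..}. Ad d)" shows "hcomp y 0 = 0"
proof -
  have "A.span (\<Union>d\<in>{1..}. Ad d) \<subseteq> {y. hcomp y 0 = 0}"
  proof (rule A.span_minimal)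
    show "(\<Union>d\<in>{1..}. Ad d) \<subseteq> {y. hcomp y 0 = 0}" by (auto simp: hcomp_homogeneous)
    show "A.subspace {y. hcomp y 0 = 0}"
      unfolding A.subspace_def by (auto simp: hcomp_zero hcomp_add hcomp_scale)
  qed
  then show ?thesis using assms by auto
qed

lemma CT_eqI:
  assumes "hcomp x 0 = scA c 1"
  shows "CT scA Ad x = c"
  unfolding CT_def
proof (rule the_equality)
  let ?D = "insert 0 {d. hcomp x d \<noteq> 0}"
  have fin: "finite ?D" using finite_hcomp_support by simp
  have "x = (\<Sum>d\<in>?D. hcomp x d)"
    by (rule sym, rule sum_hcomp_superset[OF fin]) auto
  also have "\<dots> = hcomp x 0 + (\<Sum>d\<in>?D - {0}. hcomp x d)"
    by (rule sum.remove[OF fin]) simp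
  finally have "x - scA c 1 = (\<Sum>d\<in>?D - {0}. hcomp x d)"
    using assms by (simp add: algebra_simps)
  also have "\<dots> \<in> A.span (\<Union>d\<in>{1..}. Ad d)"
    by (intro A.span_sum A.span_base) (auto intro: hcomp_in simp: Suc_le_eq)
  finally show "x - scA c 1 \<in> A.span (\<Union>d\<in>{1..}. Ad d)" .
  fix c' assume "x - scA c' 1 \<in> A.span (\<Union>d\<in>{1..}. Ad d)"
  then have "hcomp (x - scA c' 1) 0 = 0" by (rule hcomp_0_span_positive)
  moreover have "hcomp (scA c' 1) 0 = scA c' 1"
    using Ad_0 by (subst hcomp_homogeneous[of _ 0]) auto
  ultimately have "scA c 1 = scA c' 1" using assms by (simp add: hcomp_diff)
  then show "c' = c" using one_neq_zero by simp
qed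

lemma hcomp_0_CT: "hcomp x 0 = scA (CT scA Ad x) 1"
proof -
  obtain c where c: "hcomp x 0 = scA c 1" using hcomp_in[of x 0] Ad_0 by auto
  then show ?thesis using CT_eqI[OF c] by simp
qed

sublocale CT: additive "CT scA Ad"
proof
  show "CT scA Ad (x + y) = CT scA Ad x + CT scA Ad y" for x y
    by (rule CT_eqI) (simp add: hcomp_add hcomp_0_CT[of x] hcomp_0_CT[of y] A.scale_left_distrib)
qed

lemma CT_scale: "CT scA Ad (scA c x) = c * CT scA Ad x"
  by (rule CT_eqI) (simp add: hcomp_scale hcomp_0_CT[of x])

lemma CT_homogeneous: "y \<in> Ad d \<Longrightarrow> d \<noteq> 0 \<Longrightarrow> CT scA Ad y = 0"
  by (rule CT_eqI) (simp add: hcomp_homogeneous)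

end

section \<open>The trace functional of a star product\<close>

locale star_quantization = graded_poisson_algebra scA Ad pb
  for scA :: "complex \<Rightarrow> 'a::comm_ring_1 \<Rightarrow> 'a" and Ad :: "nat \<Rightarrow> 'a set"
    and pb :: "'a \<Rightarrow> 'a \<Rightarrow> 'a" +
  fixes scB :: "complex \<Rightarrow> 'b::ring_1 \<Rightarrow> 'b" and F :: "nat \<Rightarrow> 'b set"
    and smb :: "nat \<Rightarrow> 'b \<Rightarrow> 'a" and s :: "'b \<Rightarrow> 'b"
    and C :: "nat \<Rightarrow> 'a \<Rightarrow> 'a \<Rightarrow> 'a" and \<phi> :: "'a \<Rightarrow> 'b"
  assumes filtered_quantization: "filtered_quantization scA Ad pb scB F smb s"
    and in_S: "(C, \<phi>) \<in> nd_short_star_products scA Ad pb scB F smb s"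

lemma star_quantizationI:
  assumes "graded_poisson_alg scA Ad pb" "filtered_quantization scA Ad pb scB F smb s"
    "(C, \<phi>) \<in> nd_short_star_products scA Ad pb scB F smb s"
  shows "star_quantization scA Ad pb scB F smb s C \<phi>"
  using assms by (simp add: star_quantization_def star_quantization_axioms_def graded_poisson_algebra_def)

sublocale star_quantization \<subseteq> B: vector_space scB
  using filtered_quantization unfolding filtered_quantization_def by simp

context star_quantization
begin

lemma scB_mult_left: "scB c (x * y) = scB c x * y"
  using filtered_quantization unfolding filtered_quantization_def by simp

lemma scB_mult_right: "scB c (x * y) = x * scB c y"
  using filtered_quantization unfolding filtered_quantization_def by (elim conjE) metis

lemma F_subspace: "B.subspace (F d)"
  using filtered_quantization unfolding filtered_quantization_def by simp

lemma F_Suc: "F d \<subseteq> F (Suc d)"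
  using filtered_quantization unfolding filtered_quantization_def by simp

lemma F_mono: "d \<le> e \<Longrightarrow> F d \<subseteq> F e"
  by (induction e rule: dec_induct) (use F_Suc in auto)

lemma F_exhaustive: "\<exists>d. x \<in> F d"
  using filtered_quantization unfolding filtered_quantization_def by (elim conjE) (metis UNIV_I UN_iff)

lemma smb_add: "x \<in> F d \<Longrightarrow> y \<in> F d \<Longrightarrow> smb d (x + y) = smb d x + smb d y"
  using filtered_quantization unfolding filtered_quantization_def by simp

lemma smb_onto: "smb d ` F d = Ad d"
  using filtered_quantization unfolding filtered_quantization_def by simp

lemma smb_eq_0_iff: "x \<in> F d \<Longrightarrow> smb d x = 0 \<longleftrightarrow> x \<in> (if d = 0 then {0} else F (d - 1))"
  using filtered_quantization unfolding filtered_quantization_def by simp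

lemma s_s: "s (s x) = x"
  using filtered_quantization unfolding filtered_quantization_def by simp

lemma s_add: "s (x + y) = s x + s y"
  using filtered_quantization unfolding filtered_quantization_def by simp

lemma s_scale: "s (scB c x) = scB c (s x)"
  using filtered_quantization unfolding filtered_quantization_def by simp

lemma s_mult: "s (x * y) = s x * s y"
  using filtered_quantization unfolding filtered_quantization_def by simp

lemma star_product: "star_product scA Ad pb C"
  using in_S unfolding nd_short_star_products_def by simp

lemma C_add_left: "C k (x + y) z = C k x z + C k y z"
  using star_product unfolding star_product_def by simp

lemma C_add_right: "C k x (y + z) = C k x y + C k x z"
  using star_product unfolding star_product_def by simp

lemma C_homogeneous_degree:
  "a \<in> Ad i \<Longrightarrow> b \<in> Ad j \<Longrightarrow> C k a b \<in> (if 2 * k \<le> i + j then Ad (i + j - 2 * k) else {0})"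
  using star_product unfolding star_product_def by (elim conjE) metis

lemma C_short: "a \<in> Ad d \<Longrightarrow> b \<in> Ad e \<Longrightarrow> min d e < k \<Longrightarrow> C k a b = 0"
  using in_S unfolding nd_short_star_products_def short_star_def by simp

lemma star_nondegenerate: "a \<in> Ad i \<Longrightarrow> a \<noteq> 0 \<Longrightarrow> \<exists>b\<in>Ad i. CT scA Ad (star_of C a b) \<noteq> 0"
  using in_S unfolding nd_short_star_products_def nondegenerate_star_def by simp

lemma phi_star: "\<phi> (star_of C a b) = \<phi> a * \<phi> b"
  using in_S unfolding nd_short_star_products_def corresponds_to_def by simp

lemma quantization_map: "quantization_map scA Ad scB F smb s \<phi>"
  using in_S unfolding nd_short_star_products_def corresponds_to_def by simp

lemma bij_phi: "bij \<phi>"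
  using quantization_map unfolding quantization_map_def by simp

lemma phi_scale: "\<phi> (scA c x) = scB c (\<phi> x)"
  using quantization_map unfolding quantization_map_def by simp

lemma phi_F: "a \<in> Ad d \<Longrightarrow> \<phi> a \<in> F d"
  using quantization_map unfolding quantization_map_def by simp

lemma smb_phi: "a \<in> Ad d \<Longrightarrow> smb d (\<phi> a) = a"
  using quantization_map unfolding quantization_map_def by simp

lemma s_phi: "a \<in> Ad d \<Longrightarrow> s (\<phi> a) = scB ((-1) ^ d) (\<phi> a)"
  using quantization_map unfolding quantization_map_def by simp

sublocale phi: additive \<phi>
  using quantization_map unfolding quantization_map_def by unfold_locales simp

sublocale s: additive s
  by unfold_locales (rule s_add)

lemma inv_phi_phi [simp]: "inv \<phi> (\<phi> a) = a"
  using bij_phi by (simp add: bij_is_inj)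

lemma phi_inv_phi [simp]: "\<phi> (inv \<phi> x) = x"
  using bij_phi by (simp add: bij_is_surj surj_f_inv_f)

sublocale inv_phi: additive "inv \<phi>"
  by unfold_locales (metis inv_phi_phi phi.add phi_inv_phi)

lemma inv_phi_scale: "inv \<phi> (scB c x) = scA c (inv \<phi> x)"
  by (metis inv_phi_phi phi_inv_phi phi_scale)

definition T :: "'b \<Rightarrow> complex" where
  "T x = CT scA Ad (inv \<phi> x)"

lemma trace_T_eq: "trace_T scA Ad (C, \<phi>) = T"
  by (simp add: fun_eq_iff trace_T_def T_def)

sublocale T: additive T
  by unfold_locales (simp add: T_def inv_phi.add CT.add)

lemma T_scale: "T (scB c x) = c * T x"
  by (simp add: T_def inv_phi_scale CT_scale)

lemma T_phi_mult: "T (\<phi> a * \<phi> b) = CT scA Ad (star_of C a b)"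
  by (simp add: phi_star[symmetric] T_def)

lemma symbol_lift_remainder:
  assumes x: "x \<in> F d"
  obtains a where "a \<in> Ad d" "x - \<phi> a \<in> (if d = 0 then {0} else F (d - 1))"
proof -
  obtain a where a: "a \<in> Ad d" "smb d x = a" using smb_onto x by blast
  have diff: "x - \<phi> a \<in> F d"
    using B.subspace_diff[OF F_subspace x phi_F[OF a(1)]] .
  have "smb d (x - \<phi> a) = 0"
    using smb_add[OF diff phi_F[OF a(1)]] a smb_phi by simp
  then show ?thesis using that a(1) smb_eq_0_iff[OF diff] by blast
qed

lemma F_hcomp_vanish: "x \<in> F d \<Longrightarrow> d < e \<Longrightarrow> hcomp (inv \<phi> x) e = 0"
proof (induction d arbitrary: x)
  case (0 x)
  then obtain a where "a \<in> Ad 0" "x = \<phi> a" by (auto elim: symbol_lift_remainder)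
  then show ?case using 0 by (simp add: hcomp_homogeneous)
next
  case (Suc d x)
  then obtain a where a: "a \<in> Ad (Suc d)" "x - \<phi> a \<in> F d" by (auto elim: symbol_lift_remainder)
  have "hcomp (inv \<phi> (x - \<phi> a)) e = 0" using Suc a(2) by simp
  then show ?case using Suc(3) by (simp add: inv_phi.diff hcomp_diff hcomp_homogeneous[OF a(1)])
qed

text \<open>This is where shortness enters: \<open>C k a b\<close> has degree \<open>i + j - 2 * k\<close> with
  \<open>k \<le> min i j\<close>, which is positive unless \<open>i = j = k\<close>.\<close>
lemma CT_star_of_distinct_degrees:
  assumes a: "a \<in> Ad i" and b: "b \<in> Ad j" and "i \<noteq> j"
  shows "CT scA Ad (star_of C a b) = 0"
proof -
  have "CT scA Ad (C k a b) = 0" for k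
  proof (cases "C k a b = 0")
    case False
    then have "k \<le> min i j" using C_short[OF a b] by (meson not_le)
    then show ?thesis
      using C_homogeneous_degree[OF a b, of k] CT_homogeneous \<open>i \<noteq> j\<close> by auto
  qed (simp add: CT.zero)
  then show ?thesis by (simp add: star_of_def CT.sum)
qed

definition qcomp :: "nat \<Rightarrow> 'b \<Rightarrow> 'b" where
  "qcomp e x = \<phi> (hcomp (inv \<phi> x) e)"

lemma phi_Ad_basis: "\<exists>Bs. finite Bs \<and> B.independent Bs \<and> B.span Bs = \<phi> ` Ad d"
proof -
  interpret phi_lin: Vector_Spaces.linear scA scB \<phi>
    by unfold_locales (simp_all add: phi.add phi_scale)
  obtain G where G: "finite G" "A.span G = Ad d" using Ad_finite_span by blast
  obtain Bs where Bs: "Bs \<subseteq> \<phi> ` G" "B.independent Bs" "\<phi> ` G \<subseteq> B.span Bs"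
    by (rule B.basis_exists)
  have "B.span Bs = B.span (\<phi> ` G)"
  proof
    show "B.span Bs \<subseteq> B.span (\<phi> ` G)" using Bs(1) by (rule B.span_mono)
    show "B.span (\<phi> ` G) \<subseteq> B.span Bs" by (rule B.span_minimal[OF Bs(3) B.subspace_span])
  qed
  also have "\<dots> = \<phi> ` Ad d"
    using phi_lin.span_image G(2) by simp
  finally have "B.span Bs = \<phi> ` Ad d" .
  moreover have "finite Bs" using Bs(1) G(1) finite_subset by blast
  ultimately show ?thesis using Bs(2) by blast
qed

sublocale blocks: orthogonal_blocks scB "\<lambda>e. \<phi> ` Ad e" qcomp "\<lambda>x y. T (x * y)"
proof unfold_locales
  fix x y z :: 'b and c e e' u
  show "T ((x + y) * z) = T (x * z) + T (y * z)" by (simp add: distrib_right T.add)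
  show "T (z * (x + y)) = T (z * x) + T (z * y)" by (simp add: distrib_left T.add)
  show "T (scB c x * z) = c * T (x * z)" by (simp add: scB_mult_left[symmetric] T_scale)
  show "T (z * scB c x) = c * T (z * x)" by (simp add: scB_mult_right[symmetric] T_scale)
  show "\<exists>Bs. finite Bs \<and> B.independent Bs \<and> B.span Bs = \<phi> ` Ad e" by (rule phi_Ad_basis)
  show "qcomp e x \<in> \<phi> ` Ad e" by (simp add: qcomp_def hcomp_in)
  have supp: "{e. qcomp e x \<noteq> 0} = {e. hcomp (inv \<phi> x) e \<noteq> 0}"
    by (metis (no_types) inv_phi_phi phi.zero qcomp_def)
  show "finite {e. qcomp e x \<noteq> 0}" by (simp add: supp finite_hcomp_support)
  show "(\<Sum>e | qcomp e x \<noteq> 0. qcomp e x) = x"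
    unfolding supp by (simp add: qcomp_def phi.sum[symmetric] sum_hcomp)
  show "T (x * y) = 0" if xy: "x \<in> \<phi> ` Ad e" "y \<in> \<phi> ` Ad e'" and "e \<noteq> e'"
  proof -
    obtain a b where "a \<in> Ad e" "b \<in> Ad e'" "x = \<phi> a" "y = \<phi> b" using xy by blast
    then show ?thesis using CT_star_of_distinct_degrees \<open>e \<noteq> e'\<close> by (simp add: T_phi_mult)
  qed
  show "\<exists>v\<in>\<phi> ` Ad e. T (u * v) \<noteq> 0" if u: "u \<in> \<phi> ` Ad e" "u \<noteq> 0"
  proof -
    obtain a where a: "a \<in> Ad e" "u = \<phi> a" using u(1) by blast
    then have "a \<noteq> 0" using u(2) phi.zero by blast
    then obtain b where "b \<in> Ad e" "CT scA Ad (star_of C a b) \<noteq> 0"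
      using star_nondegenerate a(1) by blast
    then show ?thesis using a(2) by (auto simp: T_phi_mult)
  qed
qed

lemma F_qcomp_vanish: "x \<in> F d \<Longrightarrow> d < e \<Longrightarrow> qcomp e x = 0"
  by (simp add: qcomp_def F_hcomp_vanish phi.zero)

lemma phi_F_mono: "a \<in> Ad e \<Longrightarrow> e \<le> d \<Longrightarrow> \<phi> a \<in> F d"
  using F_mono[of e d] phi_F[of a e] by blast

lemma span_blocks_F: "B.span (\<Union>e\<in>{..d}. \<phi> ` Ad e) \<subseteq> F d"
  by (rule B.span_minimal[OF _ F_subspace]) (auto intro: phi_F_mono)

lemma T_right_nondegenerate_F:
  assumes u: "u \<in> F d" and orth: "\<And>y. y \<in> F d \<Longrightarrow> T (y * u) = 0"
  shows "u = 0"
proof (rule blocks.eq_0_if_orthogonal_to_blocks[of "{..d}"])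
  show "qcomp e u = 0" if "e \<notin> {..d}" for e
    using F_qcomp_vanish[OF u] that by simp
  show "T (v * u) = 0" if "e \<in> {..d}" "v \<in> \<phi> ` Ad e" for e v
    using orth phi_F_mono that by auto
qed

lemma T_right_nondegenerate: "(\<And>y. T (y * u) = 0) \<Longrightarrow> u = 0"
  by (rule blocks.eq_0_if_orthogonal_to_blocks[of UNIV]) simp_all

lemma T_left_nondegenerate: "(\<And>y. T (x * y) = 0) \<Longrightarrow> x = 0"
  by (rule orthogonal_blocks.eq_0_if_orthogonal_to_blocks[OF blocks.transpose, of UNIV]) simp_all

lemma twisted_partner_exists:
  assumes x: "x \<in> F d"
  shows "\<exists>z\<in>F d. \<forall>y. T (x * y) = T (y * z)"
proof -
  have "\<exists>z\<in>B.span (\<Union>e\<in>{..d}. \<phi> ` Ad e). \<forall>y. T (x * y) = T (y * z)"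
  proof (rule blocks.functional_represented_right)
    show "T (x * v) = 0" if "e \<notin> {..d}" "v \<in> \<phi> ` Ad e" for e v
      using blocks.form_comp_left[OF that(2), of x] F_qcomp_vanish[OF x, of e] that(1)
      by (simp add: T.zero)
  qed (simp_all only: finite_atMost distrib_left T.add scB_mult_right[symmetric] T_scale)
  then show ?thesis using span_blocks_F by blast
qed

lemma twisted_preimage_exists: "\<exists>x. \<forall>y. T (x * y) = T (y * z)"
proof -
  obtain d where z: "z \<in> F d" using F_exhaustive by blast
  have "\<exists>x\<in>B.span (\<Union>e\<in>{..d}. \<phi> ` Ad e). \<forall>y. T (y * z) = T (x * y)"
  proof (rule blocks.functional_represented_left)
    show "T (v * z) = 0" if "e \<notin> {..d}" "v \<in> \<phi> ` Ad e" for e v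
      using blocks.form_comp_right[OF that(2), of z] F_qcomp_vanish[OF z, of e] that(1)
      by (simp add: T.zero)
  qed (simp_all only: finite_atMost distrib_right T.add scB_mult_left[symmetric] T_scale)
  then show ?thesis by metis
qed

end

section \<open>The twisting automorphism\<close>

definition twisting_aut ::
  "(complex \<Rightarrow> 'a::comm_ring_1 \<Rightarrow> 'a) \<Rightarrow> (nat \<Rightarrow> 'a set) \<Rightarrow>
   (nat \<Rightarrow> 'a \<Rightarrow> 'a \<Rightarrow> 'a) \<times> ('a \<Rightarrow> 'b::ring_1) \<Rightarrow> 'b \<Rightarrow> 'b" where
  "twisting_aut scA Ad P x = (SOME z. \<forall>y. trace_T scA Ad P (x * y) = trace_T scA Ad P (y * z))"

context star_quantization
begin

abbreviation g :: "'b \<Rightarrow> 'b" where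
  "g \<equiv> twisting_aut scA Ad (C, \<phi>)"

lemma T_twisted: "T (x * y) = T (y * g x)"
proof -
  obtain d where "x \<in> F d" using F_exhaustive by blast
  then have "\<exists>z. \<forall>y. T (x * y) = T (y * z)" using twisted_partner_exists by blast
  then have "\<forall>y. T (x * y) = T (y * g x)"
    unfolding twisting_aut_def trace_T_eq by (rule someI_ex)
  then show ?thesis by blast
qed

lemma g_eqI:
  assumes "\<And>y. T (x * y) = T (y * z)"
  shows "g x = z"
proof -
  have "T (y * (z - g x)) = 0" for y
    using assms[of y] T_twisted[of x y] by (simp add: right_diff_distrib T.diff)
  then show ?thesis using T_right_nondegenerate by fastforce
qed

lemma g_F: "x \<in> F d \<Longrightarrow> g x \<in> F d"
  using twisted_partner_exists g_eqI by metis

lemma g_add: "g (x + y) = g x + g y"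
proof (rule g_eqI)
  show "T ((x + y) * w) = T (w * (g x + g y))" for w
    by (simp only: distrib_right distrib_left T.add T_twisted[of x w] T_twisted[of y w])
qed

lemma g_scale: "g (scB c x) = scB c (g x)"
proof (rule g_eqI)
  show "T (scB c x * w) = T (w * scB c (g x))" for w
    by (simp only: scB_mult_left[symmetric] scB_mult_right[symmetric] T_scale T_twisted[of x w])
qed

lemma g_mult: "g (x * y) = g x * g y"
proof (rule g_eqI)
  fix w
  have "T (x * y * w) = T (x * (y * w))" by (simp only: mult.assoc)
  also have "\<dots> = T (y * w * g x)" by (rule T_twisted)
  also have "\<dots> = T (y * (w * g x))" by (simp only: mult.assoc)
  also have "\<dots> = T (w * g x * g y)" by (rule T_twisted)
  finally show "T (x * y * w) = T (w * (g x * g y))" by (simp only: mult.assoc)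
qed

lemma g_one: "g 1 = 1"
  by (rule g_eqI) simp

lemma inj_g: "inj g"
proof (rule injI)
  fix x x' assume "g x = g x'"
  then have "T ((x - x') * y) = 0" for y
    using T_twisted[of x y] T_twisted[of x' y] by (simp add: left_diff_distrib T.diff)
  then show "x = x'" using T_left_nondegenerate by fastforce
qed

lemma surj_g: "surj g"
  using twisted_preimage_exists g_eqI by (metis surjI)

text \<open>Only degree 0 contributes to \<open>T\<close>, and there \<open>s\<close> acts trivially.\<close>
lemma T_s: "T (s x) = T x"
proof -
  have "(\<lambda>a. T (s (\<phi> a))) = (\<lambda>a. T (\<phi> a))"
  proof (rule additive_eq_on_homogeneous)
    show "additive (\<lambda>a. T (s (\<phi> a)))" "additive (\<lambda>a. T (\<phi> a))"
      by unfold_locales (simp_all add: phi.add s.add T.add)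
    show "T (s (\<phi> a)) = T (\<phi> a)" if a: "a \<in> Ad d" for d a
    proof (cases "d = 0")
      case False
      then have "T (\<phi> a) = 0" using CT_homogeneous[OF a] by (simp add: T_def)
      then show ?thesis using s_phi[OF a] by (simp add: T_scale)
    qed (use s_phi[OF a] in simp)
  qed
  then show ?thesis by (metis phi_inv_phi)
qed

lemma g_s: "g (s x) = s (g x)"
proof (rule g_eqI)
  fix y
  have "T (s x * y) = T (s (s x * y))" by (simp only: T_s)
  also have "\<dots> = T (x * s y)" by (simp only: s_mult s_s)
  also have "\<dots> = T (s y * g x)" by (rule T_twisted)
  also have "\<dots> = T (s (s y * g x))" by (simp only: T_s)
  also have "\<dots> = T (y * s (g x))" by (simp only: s_mult s_s)
  finally show "T (s x * y) = T (y * s (g x))" .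
qed

lemma g_characterization:
  "g \<in> filt_aut scB F s \<and> (\<forall>x y. T (x * y) = T (y * g x)) \<and>
   (\<forall>h\<in>filt_aut scB F s. (\<forall>x y. T (x * y) = T (y * h x)) \<longrightarrow> h = g)"
proof (intro conjI ballI allI impI)
  show "g \<in> filt_aut scB F s"
    unfolding filt_aut_def using inj_g surj_g g_add g_scale g_mult g_one g_F g_s
    by (auto simp: bij_def)
  show "h = g" if "\<forall>x y. T (x * y) = T (y * h x)" for h
    by (rule ext, rule sym, rule g_eqI) (use that in blast)
qed (rule T_twisted)

lemma T_vanishes_on_twisted_commutators:
  assumes "x \<in> B.span {a * b - b * g a | a b. True}"
  shows "T x = 0"
proof -
  have "B.span {a * b - b * g a | a b. True} \<subseteq> {x. T x = 0}"
  proof (rule B.span_minimal)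
    show "{a * b - b * g a | a b. True} \<subseteq> {x. T x = 0}"
    proof
      fix x assume "x \<in> {a * b - b * g a | a b. True}"
      then obtain a b where "x = a * b - b * g a" by blast
      then show "x \<in> {x. T x = 0}" using T_twisted[of a b] by (simp add: T.diff)
    qed
    show "B.subspace {x. T x = 0}"
      unfolding B.subspace_def by (auto simp: T.zero T.add T_scale)
  qed
  then show ?thesis using assms by auto
qed

lemma restrict_T_in_hh0_s_dual: "restrict_s s T \<in> hh0_s_dual scB s g"
  unfolding hh0_s_dual_def restrict_s_def
  using T_vanishes_on_twisted_commutators by (auto simp: T.add T_scale s_add s_scale)

lemma T_eq_restrict_s: "T x = restrict_s s T (scB (1/2) (x + s x))"
proof -
  let ?y = "scB (1/2) (x + s x)"
  have "s ?y = ?y" by (simp add: s_scale s_add s_s add.commute)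
  moreover have "T ?y = T x" by (simp add: T_scale T.add T_s)
  ultimately show ?thesis by (simp add: restrict_s_def)
qed

lemma T_orthogonal_lower_filtration:
  assumes a: "a \<in> Ad d" and "0 < d" and y: "y \<in> F (d - 1)"
  shows "T (y * \<phi> a) = 0"
proof -
  have "T (y * \<phi> a) = T (qcomp d y * \<phi> a)"
    using a by (intro blocks.form_comp_left) simp
  also have "qcomp d y = 0" using F_qcomp_vanish[OF y] \<open>0 < d\<close> by simp
  finally show ?thesis by (simp add: T.zero)
qed

lemma phi_unique_lift:
  assumes a: "a \<in> Ad d" and z: "z \<in> F d" "smb d z = a"
    and orth: "0 < d \<Longrightarrow> \<forall>y\<in>F (d - 1). T (y * z) = 0"
  shows "z = \<phi> a"
proof -
  have diff: "z - \<phi> a \<in> F d" using B.subspace_diff[OF F_subspace z(1) phi_F[OF a]] .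
  have "smb d (z - \<phi> a) = 0"
    using smb_add[OF diff phi_F[OF a]] z(2) smb_phi[OF a] by simp
  then have lower: "z - \<phi> a \<in> (if d = 0 then {0} else F (d - 1))"
    using smb_eq_0_iff[OF diff] by blast
  show ?thesis
  proof (cases "d = 0")
    case False
    have "T (y * (z - \<phi> a)) = 0" if "y \<in> F (d - 1)" for y
      using orth T_orthogonal_lower_filtration[OF a] that False
      by (simp add: right_diff_distrib T.diff)
    then show ?thesis using T_right_nondegenerate_F lower False by fastforce
  qed (use lower in simp)
qed

lemma C_homogeneous:
  assumes a: "a \<in> Ad i" and b: "b \<in> Ad j"
  shows "C k a b = (if 2 * k \<le> i + j then hcomp (star_of C a b) (i + j - 2 * k) else 0)"
proof (cases "2 * k \<le> i + j")
  case True
  let ?K = "{k'. C k' a b \<noteq> 0}"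
  have comp: "hcomp (C k' a b) (i + j - 2 * k) = (if k' = k then C k' a b else 0)"
    if "k' \<in> ?K" for k'
  proof -
    have "2 * k' \<le> i + j" and "C k' a b \<in> Ad (i + j - 2 * k')"
      using C_homogeneous_degree[OF a b, of k'] that by (auto split: if_splits)
    then show ?thesis using True by (auto simp: hcomp_homogeneous)
  qed
  have fin: "finite ?K"
  proof (rule finite_subset)
    show "?K \<subseteq> {..i + j}"
    proof
      fix k' assume "k' \<in> ?K"
      then show "k' \<in> {..i + j}" using C_homogeneous_degree[OF a b, of k'] by (auto split: if_splits)
    qed
  qed simp
  have "hcomp (star_of C a b) (i + j - 2 * k) = (\<Sum>k'\<in>?K. hcomp (C k' a b) (i + j - 2 * k))"
    by (simp add: star_of_def hcomp_sum)
  also have "\<dots> = (\<Sum>k'\<in>?K. if k' = k then C k' a b else 0)"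
    by (rule sum.cong[OF refl comp])
  also have "\<dots> = C k a b"
    using fin by auto
  finally show ?thesis using True by simp
qed (use C_homogeneous_degree[OF a b, of k] in simp)

end

section \<open>The trace determines the star product\<close>

context star_quantization
begin

lemma phi_eq_if_same_trace:
  assumes S: "(C', \<phi>') \<in> nd_short_star_products scA Ad pb scB F smb s"
    and same_trace: "trace_T scA Ad (C', \<phi>') = T"
  shows "\<phi>' = \<phi>"
proof -
  interpret Q': star_quantization scA Ad pb scB F smb s C' \<phi>'
    using graded_poisson filtered_quantization S by (rule star_quantizationI)
  have T': "Q'.T = T" using same_trace Q'.trace_T_eq by simp
  show ?thesis
  proof (rule additive_eq_on_homogeneous[OF Q'.phi.additive_axioms phi.additive_axioms])
    fix d a assume a: "a \<in> Ad d"
    show "\<phi>' a = \<phi> a"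
      using phi_unique_lift[OF a Q'.phi_F[OF a] Q'.smb_phi[OF a]]
        Q'.T_orthogonal_lower_filtration[OF a] T' by simp
  qed
qed

lemma C_eq_if_same_phi:
  assumes S: "(C', \<phi>) \<in> nd_short_star_products scA Ad pb scB F smb s"
  shows "C' = C"
proof (intro ext)
  interpret Q': star_quantization scA Ad pb scB F smb s C' \<phi>
    using graded_poisson filtered_quantization S by (rule star_quantizationI)
  have "star_of C' a b = star_of C a b" for a b
    by (metis Q'.phi_star phi_star inv_phi_phi)
  then have homogeneous: "C' k a b = C k a b" if "a \<in> Ad i" "b \<in> Ad j" for k a b i j
    using Q'.C_homogeneous[OF that] C_homogeneous[OF that] by simp
  fix k a b
  have "(\<lambda>b. C' k a b) = (\<lambda>b. C k a b)" if "a \<in> Ad i" for a i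
    using homogeneous[OF that]
    by (intro additive_eq_on_homogeneous) (simp_all add: additive_def Q'.C_add_right C_add_right)
  then have "(\<lambda>a. C' k a b) = (\<lambda>a. C k a b)"
    by (intro additive_eq_on_homogeneous) (simp_all add: additive_def Q'.C_add_left C_add_left fun_eq_iff)
  then show "C' k a b = C k a b" by metis
qed

end

lemma inj_on_restricted_trace:
  assumes "graded_poisson_alg scA Ad pb" "filtered_quantization scA Ad pb scB F smb s"
  shows "inj_on (\<lambda>P. restrict_s s (trace_T scA Ad P)) (nd_short_star_products scA Ad pb scB F smb s)"
proof (rule inj_onI, clarify)
  fix C1 \<phi>1 C2 \<phi>2
  assume S1: "(C1, \<phi>1) \<in> nd_short_star_products scA Ad pb scB F smb s"
    and S2: "(C2, \<phi>2) \<in> nd_short_star_products scA Ad pb scB F smb s"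
    and eq: "restrict_s s (trace_T scA Ad (C1, \<phi>1)) = restrict_s s (trace_T scA Ad (C2, \<phi>2))"
  interpret Q1: star_quantization scA Ad pb scB F smb s C1 \<phi>1
    using assms S1 by (rule star_quantizationI)
  interpret Q2: star_quantization scA Ad pb scB F smb s C2 \<phi>2
    using assms S2 by (rule star_quantizationI)
  have "trace_T scA Ad (C2, \<phi>2) = Q1.T"
    using eq Q1.T_eq_restrict_s Q2.T_eq_restrict_s by (simp add: Q1.trace_T_eq Q2.trace_T_eq fun_eq_iff)
  then have "\<phi>2 = \<phi>1" by (rule Q1.phi_eq_if_same_trace[OF S2])
  moreover have "C2 = C1" using Q1.C_eq_if_same_phi S2 calculation by simp
  ultimately show "C1 = C2 \<and> \<phi>1 = \<phi>2" by simp
qed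

lemma twisting_aut_characterization:
  assumes "graded_poisson_alg scA Ad pb" "filtered_quantization scA Ad pb scB F smb s"
    and "P \<in> nd_short_star_products scA Ad pb scB F smb s"
  shows "twisting_aut scA Ad P \<in> filt_aut scB F s \<and>
    (\<forall>x y. trace_T scA Ad P (x * y) = trace_T scA Ad P (y * twisting_aut scA Ad P x)) \<and>
    (\<forall>h\<in>filt_aut scB F s. (\<forall>x y. trace_T scA Ad P (x * y) = trace_T scA Ad P (y * h x)) \<longrightarrow>
       h = twisting_aut scA Ad P)"
proof -
  obtain C \<phi> where P: "P = (C, \<phi>)" by fastforce
  interpret star_quantization scA Ad pb scB F smb s C \<phi>
    using assms unfolding P by (rule star_quantizationI)
  show ?thesis using g_characterization by (simp add: P trace_T_eq)
qed

lemma restricted_trace_in_hh0_s_dual: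
  assumes "graded_poisson_alg scA Ad pb" "filtered_quantization scA Ad pb scB F smb s"
    and "P \<in> nd_short_star_products scA Ad pb scB F smb s"
  shows "restrict_s s (trace_T scA Ad P) \<in> hh0_s_dual scB s (twisting_aut scA Ad P)"
proof -
  obtain C \<phi> where P: "P = (C, \<phi>)" by fastforce
  interpret star_quantization scA Ad pb scB F smb s C \<phi>
    using assms unfolding P by (rule star_quantizationI)
  show ?thesis using restrict_T_in_hh0_s_dual by (simp add: P trace_T_eq)
qed

theorem corollary3p5:
  fixes scA :: "complex \<Rightarrow> 'a::comm_ring_1 \<Rightarrow> 'a" and Ad :: "nat \<Rightarrow> 'a set"
    and pb :: "'a \<Rightarrow> 'a \<Rightarrow> 'a"
    and scB :: "complex \<Rightarrow> 'b::ring_1 \<Rightarrow> 'b" and F :: "nat \<Rightarrow> 'b set"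
    and smb :: "nat \<Rightarrow> 'b \<Rightarrow> 'a" and s :: "'b \<Rightarrow> 'b"
  assumes "graded_poisson_alg scA Ad pb"
    and "filtered_quantization scA Ad pb scB F smb s"
  defines "S \<equiv> nd_short_star_products scA Ad pb scB F smb s"
  shows "\<exists>\<pi>. (\<forall>P\<in>S. \<pi> P \<in> filt_aut scB F s \<and>
                 (\<forall>x y. trace_T scA Ad P (x * y) = trace_T scA Ad P (y * \<pi> P x)) \<and>
                 (\<forall>h\<in>filt_aut scB F s.
                    (\<forall>x y. trace_T scA Ad P (x * y) = trace_T scA Ad P (y * h x)) \<longrightarrow> h = \<pi> P)) \<and>
             (\<forall>g. inj_on (\<lambda>P. restrict_s s (trace_T scA Ad P)) {P\<in>S. \<pi> P = g} \<and>
                  (\<lambda>P. restrict_s s (trace_T scA Ad P)) ` {P\<in>S. \<pi> P = g} \<subseteq> hh0_s_dual scB s g)"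
proof (intro exI[of _ "twisting_aut scA Ad"] conjI allI)
  show "\<forall>P\<in>S. twisting_aut scA Ad P \<in> filt_aut scB F s \<and>
    (\<forall>x y. trace_T scA Ad P (x * y) = trace_T scA Ad P (y * twisting_aut scA Ad P x)) \<and>
    (\<forall>h\<in>filt_aut scB F s. (\<forall>x y. trace_T scA Ad P (x * y) = trace_T scA Ad P (y * h x)) \<longrightarrow>
       h = twisting_aut scA Ad P)"
    using twisting_aut_characterization[OF assms(1,2)] unfolding S_def by blast
  fix g
  show "inj_on (\<lambda>P. restrict_s s (trace_T scA Ad P)) {P \<in> S. twisting_aut scA Ad P = g}"
    using inj_on_restricted_trace[OF assms(1,2)] unfolding S_def by (rule inj_on_subset) blast
  show "(\<lambda>P. restrict_s s (trace_T scA Ad P)) ` {P \<in> S. twisting_aut scA Ad P = g}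
    \<subseteq> hh0_s_dual scB s g"
    using restricted_trace_in_hh0_s_dual[OF assms(1,2)] unfolding S_def by blast
qed

end
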